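(* Let $q$ be a positive integer and let $\Gamma$ be a primitive strongly regular graph with $v=(q^2+2q-1)(q^2+3q+1)$ vertices, valency $k$, eigenvalues $e^+ = q$ and $e^- = -q^2-q$, and let $m^-$ be the multiplicity of $e^-$, where $ve^- = m^-(e^- - k)$. If $\Gamma$ has exactly $m^-+1$ Delsarte cocliques, then there exists a strongly regular graph with $q^2(q+3)^2$ vertices and eigenvalues $e^+ = q$ and $e^- = -q^2-2q$.
   Context: A strongly regular graph with parameters $(v,k,\lambda,\mu)$ has $v$ vertices, is $k$-regular, two adjacent vertices have $\lambda$ common neighbours and two distinct non-adjacent vertices have $\mu$ common neighbours; its adjacency matrix has eigenvalues $k \ge e^+ \ge 0 > e^-$, and $m^-$ is the multiplicity of $e^-$. Primitive means the graph and its complement are connected. A Delsarte coclique is a set of pairwise non-adjacent vertices of size $\frac{ve^-}{e^- - k}$. *)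

theory Defs
  imports "Jordan_Normal_Form.Char_Poly"
begin

text \<open>Simple graphs on the vertex set {0..<n}, given by an adjacency predicate E
  (only its values on {0..<n} matter).\<close>

definition simple_graph :: "nat \<Rightarrow> (nat \<Rightarrow> nat \<Rightarrow> bool) \<Rightarrow> bool" where
  "simple_graph n E \<longleftrightarrow> (\<forall>x<n. \<forall>y<n. E x y \<longleftrightarrow> E y x) \<and> (\<forall>x<n. \<not> E x x)"

definition strongly_regular ::
  "nat \<Rightarrow> (nat \<Rightarrow> nat \<Rightarrow> bool) \<Rightarrow> nat \<Rightarrow> nat \<Rightarrow> nat \<Rightarrow> bool" where
  "strongly_regular n E k lam mu \<longleftrightarrow>
     simple_graph n E \<and>
     (\<forall>x<n. card {y. y < n \<and> E x y} = k) \<and>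
     (\<forall>x<n. \<forall>y<n. x \<noteq> y \<and> E x y \<longrightarrow> card {z. z < n \<and> E x z \<and> E y z} = lam) \<and>
     (\<forall>x<n. \<forall>y<n. x \<noteq> y \<and> \<not> E x y \<longrightarrow> card {z. z < n \<and> E x z \<and> E y z} = mu)"

definition connected_graph :: "nat \<Rightarrow> (nat \<Rightarrow> nat \<Rightarrow> bool) \<Rightarrow> bool" where
  "connected_graph n E \<longleftrightarrow>
     (\<forall>x<n. \<forall>y<n. (x, y) \<in> ({(a, b). a < n \<and> b < n \<and> E a b})\<^sup>*)"

definition complement_graph :: "(nat \<Rightarrow> nat \<Rightarrow> bool) \<Rightarrow> nat \<Rightarrow> nat \<Rightarrow> bool" where
  "complement_graph E x y \<longleftrightarrow> x \<noteq> y \<and> \<not> E x y"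

definition primitive :: "nat \<Rightarrow> (nat \<Rightarrow> nat \<Rightarrow> bool) \<Rightarrow> bool" where
  "primitive n E \<longleftrightarrow> connected_graph n E \<and> connected_graph n (complement_graph E)"

definition adj_matrix :: "nat \<Rightarrow> (nat \<Rightarrow> nat \<Rightarrow> bool) \<Rightarrow> real mat" where
  "adj_matrix n E = mat n n (\<lambda>(i, j). if E i j then 1 else 0)"

definition srg_eigenvalues ::
  "nat \<Rightarrow> (nat \<Rightarrow> nat \<Rightarrow> bool) \<Rightarrow> nat \<Rightarrow> real \<Rightarrow> real \<Rightarrow> bool" where
  "srg_eigenvalues n E k ep em \<longleftrightarrow>
     eigenvalue (adj_matrix n E) (real k) \<and>
     eigenvalue (adj_matrix n E) ep \<and> eigenvalue (adj_matrix n E) em \<and>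
     real k \<ge> ep \<and> ep \<ge> 0 \<and> 0 > em \<and>
     (\<forall>r. eigenvalue (adj_matrix n E) r \<longrightarrow> r \<in> {real k, ep, em})"

text \<open>Multiplicity of an eigenvalue (algebraic = geometric, the matrix being symmetric).\<close>
definition eig_mult :: "real mat \<Rightarrow> real \<Rightarrow> nat" where
  "eig_mult A r = order r (char_poly A)"

definition coclique :: "nat \<Rightarrow> (nat \<Rightarrow> nat \<Rightarrow> bool) \<Rightarrow> nat set \<Rightarrow> bool" where
  "coclique n E C \<longleftrightarrow> C \<subseteq> {0..<n} \<and> (\<forall>x\<in>C. \<forall>y\<in>C. \<not> E x y)"

definition delsarte_coclique ::
  "nat \<Rightarrow> (nat \<Rightarrow> nat \<Rightarrow> bool) \<Rightarrow> nat \<Rightarrow> real \<Rightarrow> nat set \<Rightarrow> bool" where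
  "delsarte_coclique n E k em C \<longleftrightarrow>
     coclique n E C \<and> real (card C) = real n * em / (em - real k)"

end

(*
  The spectrum determines the parameters: from r + s = \<lambda> - \<mu>, r s = \<mu> - k and
  k\<^sup>2 = k + \<lambda> k + \<mu> (v - 1 - k) one gets k = q\<^sup>3 + 2q\<^sup>2, \<lambda> = 0, \<mu> = q\<^sup>2 (the other root
  of the resulting quadratic would make the multiplicity m\<^sup>- non-integral), and the Delsarte
  cocliques are the cocliques of size c = (q\<^sup>2 + 2q - 1)(q + 1) = m\<^sup>-.

  Counting first and second moments (and Cauchy-Schwarz) shows that these c + 1 cocliques
  behave like the blocks of a design: a vertex outside a Delsarte coclique has q\<^sup>2 + q
  neighbours in it, two of them meet in q\<^sup>2 + q - 1 vertices, every vertex lies in q\<^sup>2 + q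
  of them and two non-adjacent vertices lie in exactly q common ones.

  Adding a new vertex for each Delsarte coclique, adjacent to its members, and one more vertex
  adjacent to all the new ones therefore gives a strongly regular graph with parameters
  (q\<^sup>2(q + 3)\<^sup>2, q\<^sup>3 + 3q\<^sup>2 + q, 0, q\<^sup>2 + q), whose eigenvalues are q and -q\<^sup>2 - 2q.
*)

theory Submission
  imports Defs
begin

declare sum_mult_of_bool_eq[simp del] sum_of_bool_mult_eq[simp del]

definition adj_op :: "nat \<Rightarrow> (nat \<Rightarrow> nat \<Rightarrow> bool) \<Rightarrow> (nat \<Rightarrow> real) \<Rightarrow> nat \<Rightarrow> real" where
  "adj_op n E f x = (\<Sum>y<n. of_bool (E x y) * f y)"

definition eigenfunction :: "nat \<Rightarrow> (nat \<Rightarrow> nat \<Rightarrow> bool) \<Rightarrow> real \<Rightarrow> (nat \<Rightarrow> real) \<Rightarrow> bool" where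
  "eigenfunction n E \<theta> f \<longleftrightarrow> (\<exists>x<n. f x \<noteq> 0) \<and> (\<forall>x<n. adj_op n E f x = \<theta> * f x)"

definition neighbours :: "nat \<Rightarrow> (nat \<Rightarrow> nat \<Rightarrow> bool) \<Rightarrow> nat \<Rightarrow> nat set" where
  "neighbours n E x = {y. y < n \<and> E x y}"

lemma adj_op_cong: "(\<And>y. y < n \<Longrightarrow> f y = g y) \<Longrightarrow> adj_op n E f x = adj_op n E g x"
  unfolding adj_op_def by (intro sum.cong) auto

lemma adj_op_scale: "adj_op n E (\<lambda>y. c * f y) x = c * adj_op n E f x"
  unfolding adj_op_def by (simp add: sum_distrib_left algebra_simps)

lemma adj_op_diff_scale: "adj_op n E (\<lambda>y. f y - c * g y) x = adj_op n E f x - c * adj_op n E g x"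
  unfolding adj_op_def by (simp add: sum_subtractf sum_distrib_left algebra_simps)

lemma real_card_neighbours: "real (card (neighbours n E x)) = (\<Sum>y<n. of_bool (E x y))"
proof -
  have "neighbours n E x = {..<n} \<inter> {y. E x y}" unfolding neighbours_def by auto
  then show ?thesis by simp
qed

lemma real_card_common_neighbours:
  "real (card (neighbours n E x \<inter> neighbours n E z)) = (\<Sum>y<n. of_bool (E x y) * of_bool (E z y))"
proof -
  have "neighbours n E x \<inter> neighbours n E z = {..<n} \<inter> {y. E x y \<and> E z y}"
    unfolding neighbours_def by auto
  then have "real (card (neighbours n E x \<inter> neighbours n E z)) = (\<Sum>y<n. of_bool (E x y \<and> E z y))"
    by simp
  moreover have "(\<Sum>y<n. of_bool (E x y) * of_bool (E z y) :: real) = (\<Sum>y<n. of_bool (E x y \<and> E z y))"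
    by (intro sum.cong) auto
  ultimately show ?thesis by simp
qed

lemma mult_adj_matrix_vec:
  assumes "v \<in> carrier_vec n" "i < n"
  shows "(adj_matrix n E *\<^sub>v v) $ i = adj_op n E (\<lambda>j. v $ j) i"
proof -
  have "(adj_matrix n E *\<^sub>v v) $ i = row (adj_matrix n E) i \<bullet> v"
    using assms unfolding adj_matrix_def by simp
  also have "\<dots> = (\<Sum>j\<in>{0..<n}. row (adj_matrix n E) i $ j * v $ j)"
    using assms unfolding scalar_prod_def by simp
  also have "\<dots> = (\<Sum>j<n. of_bool (E i j) * v $ j)"
    by (rule sum.cong) (use assms in \<open>auto simp: adj_matrix_def\<close>)
  finally show ?thesis unfolding adj_op_def .
qed

lemma eigenfunction_of_eigenvalue:
  assumes "eigenvalue (adj_matrix n E) \<theta>"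
  shows "\<exists>f. eigenfunction n E \<theta> f"
proof -
  obtain v where v: "v \<in> carrier_vec n" "v \<noteq> 0\<^sub>v n" "adj_matrix n E *\<^sub>v v = \<theta> \<cdot>\<^sub>v v"
    using assms unfolding eigenvalue_def eigenvector_def adj_matrix_def by auto
  have "\<exists>x<n. v $ x \<noteq> 0"
  proof (rule ccontr)
    assume "\<not> (\<exists>x<n. v $ x \<noteq> 0)"
    then have "v = 0\<^sub>v n" using v(1) by (intro eq_vecI) auto
    with v(2) show False ..
  qed
  moreover have "adj_op n E (\<lambda>j. v $ j) x = \<theta> * v $ x" if "x < n" for x
  proof -
    have "adj_op n E (\<lambda>j. v $ j) x = (adj_matrix n E *\<^sub>v v) $ x"
      using mult_adj_matrix_vec[OF v(1) that] by simp
    also have "\<dots> = \<theta> * v $ x" using v(1,3) that by auto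
    finally show ?thesis .
  qed
  ultimately show ?thesis
    unfolding eigenfunction_def by blast
qed

lemma eigenvalue_of_eigenfunction:
  assumes "eigenfunction n E \<theta> f"
  shows "eigenvalue (adj_matrix n E) \<theta>"
proof -
  obtain x0 where x0: "x0 < n" "f x0 \<noteq> 0" and ev: "\<forall>x<n. adj_op n E f x = \<theta> * f x"
    using assms unfolding eigenfunction_def by blast
  define v where "v = vec n f"
  have v: "v \<in> carrier_vec n" unfolding v_def by simp
  have "v \<noteq> 0\<^sub>v n"
  proof
    assume "v = 0\<^sub>v n"
    then have "v $ x0 = 0" using x0 by simp
    with x0 show False unfolding v_def by simp
  qed
  moreover have "adj_matrix n E *\<^sub>v v = \<theta> \<cdot>\<^sub>v v"
  proof (rule eq_vecI)
    fix i assume "i < dim_vec (\<theta> \<cdot>\<^sub>v v)"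
    then have i: "i < n" unfolding v_def by simp
    have "(adj_matrix n E *\<^sub>v v) $ i = adj_op n E f i"
      unfolding mult_adj_matrix_vec[OF v i] by (rule adj_op_cong) (simp add: v_def)
    then show "(adj_matrix n E *\<^sub>v v) $ i = (\<theta> \<cdot>\<^sub>v v) $ i"
      using ev i by (simp add: v_def)
  qed (simp add: adj_matrix_def v_def)
  ultimately show ?thesis
    unfolding eigenvalue_def eigenvector_def using v by (auto simp: adj_matrix_def)
qed

lemma eigenvalue_adj_matrix_iff:
  "eigenvalue (adj_matrix n E) \<theta> \<longleftrightarrow> (\<exists>f. eigenfunction n E \<theta> f)"
  using eigenfunction_of_eigenvalue eigenvalue_of_eigenfunction by blast

lemma regular_eigenvalue_abs_le:
  assumes regular: "\<And>x. x < n \<Longrightarrow> card (neighbours n E x) = k"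
    and ef: "eigenfunction n E \<theta> f"
  shows "\<bar>\<theta>\<bar> \<le> real k"
proof -
  define M where "M = Max ((\<lambda>y. \<bar>f y\<bar>) ` {..<n})"
  have fin: "finite ((\<lambda>y. \<bar>f y\<bar>) ` {..<n})" by simp
  have max: "\<bar>f y\<bar> \<le> M" if "y < n" for y
    unfolding M_def using fin that by (intro Max_ge) auto
  obtain x0 where x0: "x0 < n" "f x0 \<noteq> 0" using ef unfolding eigenfunction_def by blast
  then have "(\<lambda>y. \<bar>f y\<bar>) ` {..<n} \<noteq> {}" by auto
  then have "M \<in> (\<lambda>y. \<bar>f y\<bar>) ` {..<n}" unfolding M_def using fin by (intro Max_in)
  then obtain x where x1: "x < n" "\<bar>f x\<bar> = M" by auto
  have x: "x < n" "f x \<noteq> 0"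
    using x1 max[OF x0(1)] x0(2) by auto
  have "\<bar>\<theta>\<bar> * \<bar>f x\<bar> = \<bar>\<Sum>y<n. of_bool (E x y) * f y\<bar>"
    using ef x unfolding eigenfunction_def adj_op_def by (simp add: abs_mult)
  also have "\<dots> \<le> (\<Sum>y<n. of_bool (E x y) * \<bar>f x\<bar>)"
    by (rule order_trans[OF sum_abs sum_mono]) (auto simp: abs_mult x1 max)
  also have "\<dots> = (\<Sum>y<n. of_bool (E x y)) * \<bar>f x\<bar>"
    by (rule sum_distrib_right[symmetric])
  also have "\<dots> = real k * \<bar>f x\<bar>"
    using real_card_neighbours[of n E x] regular[OF x(1)] by simp
  finally show ?thesis using x(2) by simp
qed

lemma sum_lessThan_mult_delta: "(a::nat) < n \<Longrightarrow> (\<Sum>y<n. g y * of_bool (y = a)) = (g a :: real)"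
proof -
  assume "a < n"
  then have "(\<Sum>y<n. g y * of_bool (y = a)) = (\<Sum>y\<in>{a}. g y)"
    by (intro sum.mono_neutral_cong_right) auto
  then show ?thesis by simp
qed

section \<open>Strongly regular graphs\<close>

context
  fixes n k lam mu :: nat and E :: "nat \<Rightarrow> nat \<Rightarrow> bool"
  assumes srg: "strongly_regular n E k lam mu"
begin

lemma srg_symmetric: "x < n \<Longrightarrow> y < n \<Longrightarrow> E x y = E y x"
  using srg unfolding strongly_regular_def simple_graph_def by blast

lemma srg_irrefl: "x < n \<Longrightarrow> \<not> E x x"
  using srg unfolding strongly_regular_def simple_graph_def by blast

lemma srg_card_neighbours: "x < n \<Longrightarrow> card (neighbours n E x) = k"
  using srg unfolding strongly_regular_def neighbours_def by blast

lemma srg_card_common_neighbours: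
  assumes "x < n" "y < n"
  shows "card (neighbours n E x \<inter> neighbours n E y) = (if x = y then k else if E x y then lam else mu)"
proof -
  have "neighbours n E x \<inter> neighbours n E y = {z. z < n \<and> E x z \<and> E y z}"
    unfolding neighbours_def by auto
  then show ?thesis
    using srg assms srg_card_neighbours[OF assms(1)] unfolding strongly_regular_def by auto
qed

lemma srg_real_card_non_neighbours:
  assumes x: "x < n"
  shows "real (card {z. z < n \<and> z \<noteq> x \<and> \<not> E x z}) = real n - 1 - real k"
proof -
  have non_neighbours: "{z. z < n \<and> z \<noteq> x \<and> \<not> E x z} = {..<n} - insert x (neighbours n E x)"
    unfolding neighbours_def by auto
  have card_insert: "card (insert x (neighbours n E x)) = k + 1"
    using srg_card_neighbours[OF x] srg_irrefl[OF x] by (simp add: neighbours_def)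
  have sub: "insert x (neighbours n E x) \<subseteq> {..<n}"
    using x unfolding neighbours_def by auto
  have "k + 1 \<le> n"
    using card_mono[OF finite_lessThan sub] card_insert by simp
  moreover have "card {z. z < n \<and> z \<noteq> x \<and> \<not> E x z} = n - (k + 1)"
    unfolding non_neighbours
    using card_Diff_subset[OF finite_subset[OF sub finite_lessThan] sub] card_insert by simp
  ultimately show ?thesis by (simp add: of_nat_diff)
qed

lemma srg_adj_op_const: "x < n \<Longrightarrow> adj_op n E (\<lambda>_. a) x = real k * a"
  using real_card_neighbours[of n E x] srg_card_neighbours[of x]
  unfolding adj_op_def by (simp add: sum_distrib_right[symmetric])

lemma srg_sum_adj_op: "(\<Sum>x<n. adj_op n E f x) = real k * (\<Sum>x<n. f x)"
proof -
  have "(\<Sum>x<n. adj_op n E f x) = (\<Sum>y<n. \<Sum>x<n. of_bool (E y x) * f y)"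
    unfolding adj_op_def by (subst sum.swap) (intro sum.cong refl, simp add: srg_symmetric)
  also have "\<dots> = (\<Sum>y<n. real k * f y)"
  proof (intro sum.cong refl)
    fix y assume "y \<in> {..<n}"
    then have "(\<Sum>x<n. of_bool (E y x)) = real k"
      using real_card_neighbours[of n E y] srg_card_neighbours[of y] by simp
    then show "(\<Sum>x<n. of_bool (E y x) * f y) = real k * f y"
      by (simp add: sum_distrib_right[symmetric])
  qed
  finally show ?thesis by (simp add: sum_distrib_left)
qed

lemma srg_adj_op_square:
  assumes x: "x < n"
  shows "adj_op n E (adj_op n E f) x
    = real k * f x + real lam * adj_op n E f x + real mu * ((\<Sum>z<n. f z) - f x - adj_op n E f x)"
proof -
  have common: "(\<Sum>y<n. of_bool (E x y) * of_bool (E y z)) =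
      real mu + (real k - real mu) * of_bool (z = x) + (real lam - real mu) * of_bool (E x z)"
    if z: "z < n" for z
  proof -
    have "(\<Sum>y<n. of_bool (E x y) * of_bool (E y z)) = real (card (neighbours n E x \<inter> neighbours n E z))"
      unfolding real_card_common_neighbours using z by (intro sum.cong refl) (simp add: srg_symmetric)
    then show ?thesis
      using srg_card_common_neighbours[OF x z] srg_irrefl[OF x] by auto
  qed
  have "adj_op n E (adj_op n E f) x = (\<Sum>y<n. \<Sum>z<n. of_bool (E x y) * of_bool (E y z) * f z)"
    unfolding adj_op_def by (simp add: sum_distrib_left mult.assoc)
  also have "\<dots> = (\<Sum>z<n. (\<Sum>y<n. of_bool (E x y) * of_bool (E y z)) * f z)"
    by (subst sum.swap) (simp add: sum_distrib_right)
  also have "\<dots> = (\<Sum>z<n. real mu * f z + (real k - real mu) * (of_bool (z = x) * f z)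
      + (real lam - real mu) * (of_bool (E x z) * f z))"
  proof (intro sum.cong refl)
    fix z assume "z \<in> {..<n}"
    then have "z < n" by simp
    then show "(\<Sum>y<n. of_bool (E x y) * of_bool (E y z)) * f z = real mu * f z
        + (real k - real mu) * (of_bool (z = x) * f z) + (real lam - real mu) * (of_bool (E x z) * f z)"
      unfolding common[OF \<open>z < n\<close>] by (simp add: algebra_simps)
  qed
  also have "\<dots> = real mu * (\<Sum>z<n. f z) + (real k - real mu) * f x + (real lam - real mu) * adj_op n E f x"
  proof -
    have "(\<Sum>z<n. of_bool (z = x) * f z) = f x"
      using sum_lessThan_mult_delta[OF x, of f] by (simp add: mult.commute)
    then show ?thesis
      unfolding sum.distrib sum_distrib_left[symmetric] by (simp add: adj_op_def)
  qed
  finally show ?thesis by (simp add: algebra_simps)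
qed

lemma srg_eigenvalue_equation:
  assumes ef: "eigenfunction n E \<theta> f" and ne: "\<theta> \<noteq> real k"
  shows "\<theta>\<^sup>2 = real k - real mu + (real lam - real mu) * \<theta>"
proof -
  obtain x where x: "x < n" "f x \<noteq> 0" and ev: "\<And>y. y < n \<Longrightarrow> adj_op n E f y = \<theta> * f y"
    using ef unfolding eigenfunction_def by blast
  have "\<theta> * (\<Sum>y<n. f y) = real k * (\<Sum>y<n. f y)"
    using srg_sum_adj_op[of f] ev by (simp add: sum_distrib_left)
  then have sum0: "(\<Sum>y<n. f y) = 0" using ne by simp
  have "adj_op n E (adj_op n E f) x = \<theta> * adj_op n E f x"
    using adj_op_cong[of n "adj_op n E f" "\<lambda>y. \<theta> * f y"] ev adj_op_scale by simp
  then have "\<theta>\<^sup>2 * f x = real k * f x + real lam * (\<theta> * f x) + real mu * (0 - f x - \<theta> * f x)"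
    using srg_adj_op_square[OF x(1), of f] sum0 ev[OF x(1)] by (simp add: power2_eq_square)
  then have "(\<theta>\<^sup>2 - (real k - real mu + (real lam - real mu) * \<theta>)) * f x = 0"
    by (simp add: algebra_simps)
  then show ?thesis using x(2) by simp
qed

lemma srg_parameter_count:
  assumes "0 < n"
  shows "real k * real k = real k + real lam * real k + real mu * (real n - 1 - real k)"
proof -
  have "adj_op n E (adj_op n E (\<lambda>_. 1)) 0 = adj_op n E (\<lambda>_. real k) 0"
    by (rule adj_op_cong) (simp add: srg_adj_op_const)
  then show ?thesis
    using srg_adj_op_square[OF assms, of "\<lambda>_. 1"] srg_adj_op_const[OF assms] by simp
qed

lemma srg_eigenvalue_sum_product:
  assumes "eigenvalue (adj_matrix n E) r" "eigenvalue (adj_matrix n E) s"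
    and "r \<noteq> s" "r \<noteq> real k" "s \<noteq> real k"
  shows "r + s = real lam - real mu" "r * s = real mu - real k"
proof -
  have r: "r\<^sup>2 = real k - real mu + (real lam - real mu) * r"
    and s: "s\<^sup>2 = real k - real mu + (real lam - real mu) * s"
    using assms srg_eigenvalue_equation unfolding eigenvalue_adj_matrix_iff by blast+
  have "(r - s) * (r + s) = (r - s) * (real lam - real mu)"
    using r s by (simp add: algebra_simps power2_eq_square)
  then show sum: "r + s = real lam - real mu" using assms(3) by simp
  show "r * s = real mu - real k"
    using r[unfolded sum[symmetric]] by (simp add: algebra_simps power2_eq_square)
qed

text \<open>If \<open>r, s\<close> are the roots of \<open>x\<^sup>2 - (\<lambda> - \<mu>) x - (k - \<mu>)\<close>, then \<open>A\<^sup>2 - (r + s) A + r s\<close>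
  annihilates every \<open>f\<close> orthogonal to the all-ones vector.\<close>
lemma srg_root_eigenfunction:
  assumes "r + s = real lam - real mu" "r * s = real mu - real k"
    and "(\<Sum>z<n. f z) = 0" "x < n"
  shows "adj_op n E (\<lambda>y. adj_op n E f y - s * f y) x = r * (adj_op n E f x - s * f x)"
proof -
  have "adj_op n E (\<lambda>y. adj_op n E f y - s * f y) x = adj_op n E (adj_op n E f) x - s * adj_op n E f x"
    by (rule adj_op_diff_scale)
  also have "\<dots> = (real k - real mu) * f x + (real lam - real mu - s) * adj_op n E f x"
    using srg_adj_op_square[OF assms(4), of f] assms(3) by (simp add: algebra_simps)
  also have "\<dots> = r * (adj_op n E f x - s * f x)"
  proof -
    have "real k - real mu = - (r * s)" "real lam - real mu - s = r"
      using assms(1,2) by simp_all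
    then show ?thesis by (simp only:) (simp add: algebra_simps)
  qed
  finally show ?thesis .
qed

lemma srg_root_eigenvalue:
  assumes "2 \<le> n" "r + s = real lam - real mu" "r * s = real mu - real k" "s \<noteq> 0" "s \<noteq> -1"
  shows "eigenvalue (adj_matrix n E) r"
proof -
  define f where "f = (\<lambda>z::nat. of_bool (z = 0) - of_bool (z = 1) :: real)"
  \<comment> \<open>\<open>f\<close> sums to zero, and \<open>A f - s f\<close> does not vanish at \<open>0\<close> since \<open>s \<notin> {0, -1}\<close>.\<close>
  have "(\<Sum>z<n. f z) = 0"
    using assms(1) by (simp add: f_def sum_subtractf sum.delta)
  then have ev: "adj_op n E (\<lambda>y. adj_op n E f y - s * f y) x = r * (adj_op n E f x - s * f x)"
    if "x < n" for x
    using srg_root_eigenfunction[OF assms(2,3) _ that] by blast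
  have "adj_op n E f 0 = - of_bool (E 0 1)"
    using assms(1) srg_irrefl[of 0] sum_lessThan_mult_delta[of 0 n "\<lambda>y. of_bool (E 0 y)"]
      sum_lessThan_mult_delta[of 1 n "\<lambda>y. of_bool (E 0 y)"]
    by (simp add: adj_op_def f_def right_diff_distrib sum_subtractf)
  then have "adj_op n E f 0 - s * f 0 \<noteq> 0"
    using assms(4,5) by (simp add: f_def)
  then have "eigenfunction n E r (\<lambda>y. adj_op n E f y - s * f y)"
    unfolding eigenfunction_def using ev assms(1) by (auto intro!: exI[of _ 0])
  then show ?thesis unfolding eigenvalue_adj_matrix_iff by blast
qed

lemma srg_eigenvaluesI:
  assumes "2 \<le> n" "0 < r" "r \<le> real k" "s < -1"
    and "r + s = real lam - real mu" "r * s = real mu - real k"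
  shows "srg_eigenvalues n E k r s"
  unfolding srg_eigenvalues_def
proof (intro conjI allI impI)
  have "eigenfunction n E (real k) (\<lambda>_. 1)"
    unfolding eigenfunction_def using assms(1) by (auto simp: srg_adj_op_const intro!: exI[of _ 0])
  then show "eigenvalue (adj_matrix n E) (real k)"
    unfolding eigenvalue_adj_matrix_iff by blast
  show "eigenvalue (adj_matrix n E) r"
    using srg_root_eigenvalue[OF assms(1,5,6)] assms(4) by simp
  show "eigenvalue (adj_matrix n E) s"
    using srg_root_eigenvalue[of s r] assms(1,2,5,6) by (simp add: add.commute mult.commute)
  fix t assume "eigenvalue (adj_matrix n E) t"
  then obtain f where f: "eigenfunction n E t f" unfolding eigenvalue_adj_matrix_iff by blast
  show "t \<in> {real k, r, s}"
  proof (cases "t = real k")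
    case False
    have "real lam - real mu = r + s" "real k - real mu = - (r * s)"
      using assms(5,6) by simp_all
    then have "(t - r) * (t - s) = 0"
      using srg_eigenvalue_equation[OF f False] by (simp add: algebra_simps power2_eq_square)
    then show ?thesis by auto
  qed simp
qed (use assms in auto)

end

section \<open>Double counting\<close>

lemma card_filter_eq_sum_of_bool: "finite I \<Longrightarrow> card {i\<in>I. P i} = (\<Sum>i\<in>I. of_bool (P i))"
  by (simp add: Collect_conj_eq Int_commute)

lemma sum_card_incidences:
  assumes "finite W" "finite I"
  shows "(\<Sum>x\<in>W. card {i\<in>I. x \<in> B i}) = (\<Sum>i\<in>I. card (B i \<inter> W))"
proof -
  have "(\<Sum>x\<in>W. card {i\<in>I. x \<in> B i}) = (\<Sum>x\<in>W. \<Sum>i\<in>I. of_bool (x \<in> B i))"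
    unfolding card_filter_eq_sum_of_bool[OF assms(2)] ..
  also have "\<dots> = (\<Sum>i\<in>I. \<Sum>x\<in>W. of_bool (x \<in> B i))"
    by (rule sum.swap)
  also have "\<dots> = (\<Sum>i\<in>I. card (B i \<inter> W))"
    using assms(1) by (intro sum.cong refl) (simp add: Int_commute)
  finally show ?thesis .
qed

lemma sum_card_incidences_squared:
  assumes "finite W" "finite I"
  shows "(\<Sum>x\<in>W. (card {i\<in>I. x \<in> B i})\<^sup>2) = (\<Sum>i\<in>I. \<Sum>j\<in>I. card (B i \<inter> B j \<inter> W))"
proof -
  have "(\<Sum>x\<in>W. (card {i\<in>I. x \<in> B i})\<^sup>2) = (\<Sum>x\<in>W. \<Sum>i\<in>I. \<Sum>j\<in>I. of_bool (x \<in> B i \<inter> B j))"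
    unfolding card_filter_eq_sum_of_bool[OF assms(2)] power2_eq_square sum_product
    by (intro sum.cong refl) auto
  also have "\<dots> = (\<Sum>i\<in>I. \<Sum>j\<in>I. \<Sum>x\<in>W. of_bool (x \<in> B i \<inter> B j))"
    by (simp only: sum.swap[of _ W])
  also have "\<dots> = (\<Sum>i\<in>I. \<Sum>j\<in>I. card (B i \<inter> B j \<inter> W))"
    using assms(1) by (intro sum.cong refl) (simp add: Int_commute Int_left_commute Int_def)
  finally show ?thesis .
qed

lemma sum_sum_if_eq:
  assumes "finite I"
  shows "(\<Sum>i\<in>I. \<Sum>j\<in>I. if i = j then a else b) = card I * (a + (card I - 1) * (b :: nat))"
proof -
  have "(\<Sum>j\<in>I. if i = j then a else b) = a + (card I - 1) * b" if "i \<in> I" for i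
  proof -
    have "(\<Sum>j\<in>I. if i = j then a else b) = (if i = i then a else b) + (\<Sum>j\<in>I - {i}. if i = j then a else b)"
      by (rule sum.remove[OF assms that])
    also have "(\<Sum>j\<in>I - {i}. if i = j then a else b) = (\<Sum>j\<in>I - {i}. b)"
      by (intro sum.cong) auto
    finally show ?thesis using assms that by simp
  qed
  then show ?thesis by simp
qed

lemma of_nat_mult_pred: "real (m * (a + (m - 1) * b)) = real m * (real a + (real m - 1) * real b)"
  by (cases m) (simp_all add: algebra_simps)

lemma sum_sq_deviation:
  fixes b :: "'a \<Rightarrow> real"
  assumes "finite W"
  shows "(\<Sum>x\<in>W. (b x - r)\<^sup>2) = (\<Sum>x\<in>W. (b x)\<^sup>2) - 2 * r * (\<Sum>x\<in>W. b x) + real (card W) * r\<^sup>2"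
proof -
  have "(\<Sum>x\<in>W. (b x - r)\<^sup>2) = (\<Sum>x\<in>W. (b x)\<^sup>2 - 2 * r * b x + r\<^sup>2)"
    by (intro sum.cong refl) (simp add: power2_diff algebra_simps)
  then show ?thesis by (simp add: sum.distrib sum_subtractf sum_distrib_left)
qed

lemma eq_of_moments:
  fixes b :: "'a \<Rightarrow> real"
  assumes "finite W" "(\<Sum>x\<in>W. b x) = real (card W) * r" "(\<Sum>x\<in>W. (b x)\<^sup>2) = real (card W) * r\<^sup>2"
    and "x \<in> W"
  shows "b x = r"
proof -
  have "(\<Sum>x\<in>W. (b x - r)\<^sup>2) = 0"
    using sum_sq_deviation[OF assms(1), of b r] assms(2,3) by (simp add: power2_eq_square)
  then show ?thesis using assms(1,4) by (simp add: sum_nonneg_eq_0_iff)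
qed

lemma sum_squared_le:
  fixes b :: "'a \<Rightarrow> real"
  assumes "finite W"
  shows "(\<Sum>x\<in>W. b x)\<^sup>2 \<le> real (card W) * (\<Sum>x\<in>W. (b x)\<^sup>2)"
proof (cases "W = {}")
  case False
  define N where "N = real (card W)"
  define S where "S = (\<Sum>x\<in>W. b x)"
  have N: "N > 0" using False assms unfolding N_def by (simp add: card_gt_0_iff)
  have "0 \<le> (\<Sum>x\<in>W. (b x - S / N)\<^sup>2)" by (intro sum_nonneg) simp
  also have "\<dots> = (\<Sum>x\<in>W. (b x)\<^sup>2) - S\<^sup>2 / N"
    using sum_sq_deviation[OF assms, of b "S / N"] N
    unfolding N_def[symmetric] S_def[symmetric] by (simp add: power2_eq_square field_simps)
  finally show ?thesis using N unfolding N_def[symmetric] S_def[symmetric] by (simp add: field_simps)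
qed simp

lemma le_of_mult_nonneg:
  fixes t a b c :: real
  assumes "0 \<le> t * a * ((t - b) * (t - c))" "t < c" "0 < a" "0 \<le> t" "0 \<le> b"
  shows "t \<le> b"
proof (cases "t = 0")
  case False
  then have "0 < t * a" using assms(3,4) by simp
  then have "0 \<le> (t - b) * (t - c)"
    using assms(1) by (meson linorder_not_le mult_pos_neg order.strict_iff_not)
  with assms(2) show ?thesis
    by (meson diff_gt_0_iff_gt diff_less_0_iff_less linorder_not_le mult_pos_neg order.strict_iff_not)
qed (use assms in simp)

lemma srg_coclique_neighbour_moments:
  assumes srg: "strongly_regular n E k lam mu"
    and S: "S \<subseteq> {..<n}" "\<forall>x\<in>S. \<forall>y\<in>S. \<not> E x y"
    and W: "W \<subseteq> {..<n}" "\<forall>y\<in>S. neighbours n E y \<subseteq> W"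
  shows "(\<Sum>x\<in>W. card {y\<in>S. E x y}) = card S * k"
    and "(\<Sum>x\<in>W. (card {y\<in>S. E x y})\<^sup>2) = card S * (k + (card S - 1) * mu)"
proof -
  have fin: "finite S" "finite W" using S(1) W(1) finite_subset by blast+
  have filter: "{y\<in>S. E x y} = {y\<in>S. x \<in> neighbours n E y}" if "x \<in> W" for x
    using that S(1) W(1) srg_symmetric[OF srg] unfolding neighbours_def by auto
  have "(\<Sum>x\<in>W. card {y\<in>S. E x y}) = (\<Sum>y\<in>S. card (neighbours n E y \<inter> W))"
    using sum_card_incidences[OF fin(2,1)] filter by simp
  also have "\<dots> = (\<Sum>y\<in>S. k)"
    using S(1) W(2) srg_card_neighbours[OF srg] by (intro sum.cong refl) (simp add: Int_absorb2 subset_iff)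
  finally show "(\<Sum>x\<in>W. card {y\<in>S. E x y}) = card S * k" by simp
  have "(\<Sum>x\<in>W. (card {y\<in>S. E x y})\<^sup>2)
      = (\<Sum>y\<in>S. \<Sum>y'\<in>S. card (neighbours n E y \<inter> neighbours n E y' \<inter> W))"
    using sum_card_incidences_squared[OF fin(2,1)] filter by simp
  also have "\<dots> = (\<Sum>y\<in>S. \<Sum>y'\<in>S. if y = y' then k else mu)"
  proof (intro sum.cong refl)
    fix y y' assume "y \<in> S" "y' \<in> S"
    moreover have "y < n" "y' < n" "y \<noteq> y' \<longrightarrow> \<not> E y y'"
      using S \<open>y \<in> S\<close> \<open>y' \<in> S\<close> by auto
    moreover have "neighbours n E y \<inter> neighbours n E y' \<inter> W = neighbours n E y \<inter> neighbours n E y'"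
      using W(2) \<open>y \<in> S\<close> by auto
    ultimately show "card (neighbours n E y \<inter> neighbours n E y' \<inter> W) = (if y = y' then k else mu)"
      using srg_card_common_neighbours[OF srg, of y y'] by auto
  qed
  finally show "(\<Sum>x\<in>W. (card {y\<in>S. E x y})\<^sup>2) = card S * (k + (card S - 1) * mu)"
    using sum_sum_if_eq[OF fin(1)] by simp
qed

section \<open>Adjoining a vertex for each block and a point at infinity\<close>

definition block_extension ::
  "nat \<Rightarrow> (nat \<Rightarrow> nat \<Rightarrow> bool) \<Rightarrow> nat \<Rightarrow> (nat \<Rightarrow> nat set) \<Rightarrow> nat \<Rightarrow> nat \<Rightarrow> bool" where
  "block_extension n E m B x y \<longleftrightarrow>
     (x < n \<and> y < n \<and> E x y)
     \<or> (x < n \<and> n \<le> y \<and> y < n + m \<and> x \<in> B (y - n))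
     \<or> (y < n \<and> n \<le> x \<and> x < n + m \<and> y \<in> B (x - n))
     \<or> (x = n + m \<and> n \<le> y \<and> y < n + m)
     \<or> (y = n + m \<and> n \<le> x \<and> x < n + m)"

lemma block_extension_vertex_cases:
  fixes x n m :: nat
  assumes "x < n + m + 1"
  obtains "x < n" | i where "i < m" "x = n + i" | "x = n + m"
proof (cases "x < n")
  case False
  show thesis
  proof (cases "x = n + m")
    case False
    then show thesis using \<open>\<not> x < n\<close> assms that(2)[of "x - n"] by simp
  qed (rule that(3))
qed (rule that(1))

lemma simple_graph_block_extension:
  "simple_graph n E \<Longrightarrow> simple_graph (n + m + 1) (block_extension n E m B)"
  unfolding simple_graph_def block_extension_def by auto

lemma card_Un_shifted_image:
  fixes n :: nat
  assumes "A \<subseteq> {..<n}" "finite I"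
  shows "card (A \<union> (+) n ` I) = card A + card I"
proof -
  have "A \<inter> (+) n ` I = {}" using assms(1) by (auto simp: subset_iff)
  then show ?thesis
    using assms finite_subset[OF assms(1)] by (simp add: card_Un_disjoint card_image)
qed

context
  fixes n m :: nat and E :: "nat \<Rightarrow> nat \<Rightarrow> bool" and B :: "nat \<Rightarrow> nat set"
  assumes blocks: "\<And>i. i < m \<Longrightarrow> B i \<subseteq> {..<n}"
begin

lemma neighbours_block_extension_old:
  assumes "x < n"
  shows "neighbours (n + m + 1) (block_extension n E m B) x
    = neighbours n E x \<union> (+) n ` {i. i < m \<and> x \<in> B i}"
proof (rule equalityI[OF subsetI subsetI])
  fix y assume "y \<in> neighbours (n + m + 1) (block_extension n E m B) x"
  then show "y \<in> neighbours n E x \<union> (+) n ` {i. i < m \<and> x \<in> B i}"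
    using assms unfolding neighbours_def block_extension_def
    by (auto intro!: rev_image_eqI[of "y - n"])
next
  fix y assume "y \<in> neighbours n E x \<union> (+) n ` {i. i < m \<and> x \<in> B i}"
  then show "y \<in> neighbours (n + m + 1) (block_extension n E m B) x"
    using assms unfolding neighbours_def block_extension_def by auto
qed

lemma neighbours_block_extension_block:
  assumes "i < m"
  shows "neighbours (n + m + 1) (block_extension n E m B) (n + i) = B i \<union> {n + m}"
  using assms blocks[OF assms] unfolding neighbours_def block_extension_def by auto

lemma neighbours_block_extension_apex:
  "neighbours (n + m + 1) (block_extension n E m B) (n + m) = (+) n ` {..<m}"
proof (rule equalityI[OF subsetI subsetI])
  fix y assume "y \<in> neighbours (n + m + 1) (block_extension n E m B) (n + m)"
  then show "y \<in> (+) n ` {..<m}"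
    unfolding neighbours_def block_extension_def by (auto intro!: rev_image_eqI[of "y - n"])
qed (auto simp: neighbours_def block_extension_def)

end

lemma real_sq_plus_2q_minus_1: "0 < q \<Longrightarrow> real (q\<^sup>2 + 2 * q - 1) = (real q)\<^sup>2 + 2 * real q - 1"
  by (simp add: of_nat_diff Suc_le_eq)

section \<open>Delsarte cocliques of an SRG with parameters \<open>(n, q\<^sup>3 + 2q\<^sup>2, 0, q\<^sup>2)\<close>\<close>

locale srg_delsarte_cocliques =
  fixes q n k c :: nat and E :: "nat \<Rightarrow> nat \<Rightarrow> bool" and Cs :: "nat set set"
  assumes q_pos: "0 < q"
    and srg: "strongly_regular n E k 0 (q\<^sup>2)"
    and k_eq: "k = q^3 + 2 * q\<^sup>2"
    and n_eq: "n = (q\<^sup>2 + 2 * q - 1) * (q\<^sup>2 + 3 * q + 1)"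
    and c_eq: "c = (q\<^sup>2 + 2 * q - 1) * (q + 1)"
    and Cs_eq: "Cs = {C. coclique n E C \<and> card C = c}"
    and card_Cs: "card Cs = c + 1"
begin

abbreviation Q :: real where "Q \<equiv> real q"

lemma real_k: "real k = Q ^ 3 + 2 * Q\<^sup>2"
  by (simp add: k_eq)

lemma real_n: "real n = (Q\<^sup>2 + 2 * Q - 1) * (Q\<^sup>2 + 3 * Q + 1)"
  unfolding n_eq of_nat_mult real_sq_plus_2q_minus_1[OF q_pos] by simp

lemma real_c: "real c = (Q\<^sup>2 + 2 * Q - 1) * (Q + 1)"
  unfolding c_eq of_nat_mult real_sq_plus_2q_minus_1[OF q_pos] by simp

lemma Q_ge_1: "1 \<le> Q"
  using q_pos by simp

lemma c_ge_1: "1 \<le> c"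
  using q_pos unfolding c_eq by (simp add: Suc_le_eq)

lemma real_c_pred: "real (c - 1) = real c - 1"
  using c_ge_1 by (simp add: of_nat_diff)

lemma real_meet_size: "real (q\<^sup>2 + q - 1) = Q\<^sup>2 + Q - 1"
  using q_pos by (simp add: of_nat_diff Suc_le_eq)

lemma real_meet_size_pred: "real (q\<^sup>2 + q - 1 - 1) = Q\<^sup>2 + Q - 2"
proof -
  have "1 \<le> q\<^sup>2" using q_pos by simp
  then have "2 \<le> q\<^sup>2 + q" using q_pos by linarith
  then show ?thesis by (simp add: of_nat_diff)
qed

lemma finite_Cs: "finite Cs"
  using card_Cs card.infinite by fastforce

lemma Cs_subset: "C \<in> Cs \<Longrightarrow> C \<subseteq> {..<n}"
  unfolding Cs_eq coclique_def by auto

lemma finite_Cs_member: "C \<in> Cs \<Longrightarrow> finite C"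
  using Cs_subset finite_subset by blast

lemma card_Cs_member: "C \<in> Cs \<Longrightarrow> card C = c"
  unfolding Cs_eq by simp

lemma Cs_coclique: "C \<in> Cs \<Longrightarrow> x \<in> C \<Longrightarrow> y \<in> C \<Longrightarrow> \<not> E x y"
  unfolding Cs_eq coclique_def by auto

lemma card_neighbours_in_coclique:
  assumes C: "C \<in> Cs" and x: "x < n" "x \<notin> C"
  shows "card {y\<in>C. E x y} = q\<^sup>2 + q"
proof -
  define W where "W = {..<n} - C"
  define b where "b z = real (card {y\<in>C. E z y})" for z
  have W: "W \<subseteq> {..<n}" "\<forall>y\<in>C. neighbours n E y \<subseteq> W"
    using Cs_coclique[OF C] unfolding W_def neighbours_def by auto
  note moments = srg_coclique_neighbour_moments[OF srg Cs_subset[OF C] _ W]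
  have "c \<le> n"
    using card_mono[OF finite_lessThan Cs_subset[OF C]] card_Cs_member[OF C] by simp
  then have card_W: "real (card W) = real n - real c"
    using Cs_subset[OF C] finite_Cs_member[OF C] card_Cs_member[OF C]
    unfolding W_def by (simp add: card_Diff_subset of_nat_diff)
  have "(\<Sum>z\<in>W. b z) = real (\<Sum>z\<in>W. card {y\<in>C. E z y})"
    unfolding b_def by simp
  also have "\<dots> = real c * real k"
    using moments(1) Cs_coclique[OF C] card_Cs_member[OF C] by simp
  also have "\<dots> = real (card W) * (Q\<^sup>2 + Q)"
    unfolding card_W real_n real_c real_k by (simp add: algebra_simps power2_eq_square power3_eq_cube)
  finally have sum_b: "(\<Sum>z\<in>W. b z) = real (card W) * (Q\<^sup>2 + Q)" .
  have "(\<Sum>z\<in>W. (b z)\<^sup>2) = real (\<Sum>z\<in>W. (card {y\<in>C. E z y})\<^sup>2)"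
    unfolding b_def by simp
  also have "\<dots> = real c * (real k + (real c - 1) * Q\<^sup>2)"
    using moments(2) Cs_coclique[OF C] card_Cs_member[OF C] of_nat_mult_pred by simp
  also have "\<dots> = real (card W) * (Q\<^sup>2 + Q)\<^sup>2"
    unfolding card_W real_n real_c real_k by (simp add: algebra_simps power2_eq_square power3_eq_cube)
  finally have "(\<Sum>z\<in>W. (b z)\<^sup>2) = real (card W) * (Q\<^sup>2 + Q)\<^sup>2" .
  then have "b x = Q\<^sup>2 + Q"
    using eq_of_moments[OF _ sum_b] x unfolding W_def by simp
  then show ?thesis unfolding b_def by (simp flip: of_nat_power of_nat_add)
qed

lemma card_Int_less:
  assumes C: "C \<in> Cs" and D: "D \<in> Cs" and "C \<noteq> D"
  shows "card (C \<inter> D) < c"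
proof -
  have "card (C \<inter> D) \<le> card C"
    using finite_Cs_member[OF C] by (intro card_mono) auto
  moreover have "card (C \<inter> D) \<noteq> card C"
  proof
    assume "card (C \<inter> D) = card C"
    then have "C \<subseteq> D"
      using card_subset_eq[OF finite_Cs_member[OF C], of "C \<inter> D"] by auto
    then have "C = D"
      using card_subset_eq[OF finite_Cs_member[OF D]] card_Cs_member[OF C] card_Cs_member[OF D] by auto
    with \<open>C \<noteq> D\<close> show False ..
  qed
  ultimately show ?thesis using card_Cs_member[OF C] by simp
qed

text \<open>Cauchy-Schwarz for the numbers of neighbours in \<open>C \<inter> D\<close> of the vertices outside
  \<open>C \<union> D\<close> gives \<open>t q\<^sup>2 (t - (q\<^sup>2 + q - 1)) (t - c) \<ge> 0\<close> for \<open>t = |C \<inter> D|\<close>.\<close>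
lemma card_Int_le:
  assumes C: "C \<in> Cs" and D: "D \<in> Cs" and "C \<noteq> D"
  shows "card (C \<inter> D) \<le> q\<^sup>2 + q - 1"
proof -
  define S where "S = C \<inter> D"
  define W where "W = {..<n} - (C \<union> D)"
  define t where "t = real (card S)"
  define b where "b z = real (card {y\<in>S. E z y})" for z
  have S: "S \<subseteq> {..<n}" "\<forall>x\<in>S. \<forall>y\<in>S. \<not> E x y"
    using Cs_subset[OF C] Cs_coclique[OF C] unfolding S_def by auto
  have W: "W \<subseteq> {..<n}" "\<forall>y\<in>S. neighbours n E y \<subseteq> W"
    using Cs_coclique[OF C] Cs_coclique[OF D] unfolding W_def S_def neighbours_def by auto
  have finite_W: "finite W" unfolding W_def by simp
  note moments = srg_coclique_neighbour_moments[OF srg S W]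
  have "card (C \<union> D) + card S = c + c"
    using card_Un_Int[OF finite_Cs_member[OF C] finite_Cs_member[OF D]]
      card_Cs_member[OF C] card_Cs_member[OF D] unfolding S_def by simp
  moreover have "card (C \<union> D) \<le> n"
    using Cs_subset[OF C] Cs_subset[OF D] card_mono[of "{..<n}" "C \<union> D"] by simp
  ultimately have card_W: "real (card W) = real n - 2 * real c + t"
    using Cs_subset[OF C] Cs_subset[OF D] finite_Cs_member[OF C] finite_Cs_member[OF D]
    unfolding W_def t_def by (simp add: card_Diff_subset of_nat_diff)
  have "(\<Sum>z\<in>W. b z) = t * real k"
    unfolding b_def t_def using moments(1) by (simp flip: of_nat_sum)
  moreover have "(\<Sum>z\<in>W. (b z)\<^sup>2) = real (\<Sum>z\<in>W. (card {y\<in>S. E z y})\<^sup>2)"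
    unfolding b_def by simp
  moreover have "\<dots> = t * (real k + (t - 1) * Q\<^sup>2)"
    unfolding moments(2) of_nat_mult_pred t_def by simp
  ultimately have "(t * real k)\<^sup>2 \<le> (real n - 2 * real c + t) * (t * (real k + (t - 1) * Q\<^sup>2))"
    using sum_squared_le[OF finite_W, of b] card_W by simp
  moreover have "(real n - 2 * real c + t) * (t * (real k + (t - 1) * Q\<^sup>2)) - (t * real k)\<^sup>2
      = t * Q\<^sup>2 * ((t - (Q\<^sup>2 + Q - 1)) * (t - real c))"
    unfolding real_n real_c real_k by (simp add: algebra_simps power2_eq_square power3_eq_cube)
  ultimately have "0 \<le> t * Q\<^sup>2 * ((t - (Q\<^sup>2 + Q - 1)) * (t - real c))"
    by linarith
  moreover have "t < real c"
    using card_Int_less[OF assms] unfolding t_def S_def by simp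
  moreover have "0 < Q\<^sup>2" using q_pos by simp
  moreover have "0 \<le> t" unfolding t_def by simp
  moreover have "0 \<le> Q\<^sup>2 + Q - 1" using Q_ge_1 zero_le_power2[of Q] by linarith
  ultimately have "t \<le> Q\<^sup>2 + Q - 1"
    by (rule le_of_mult_nonneg)
  then show ?thesis using real_meet_size unfolding t_def S_def by linarith
qed

lemma real_c_mult_meet_size: "real (c * (q\<^sup>2 + q - 1)) = real c * (Q\<^sup>2 + Q - 1)"
  unfolding of_nat_mult real_meet_size ..

text \<open>Both sums are nonnegative, the second one by \<open>card_Int_le\<close>; hence both vanish.\<close>
lemma coclique_cover_deviation:
  "(\<Sum>x<n. (real (card {C\<in>Cs. x \<in> C}) - (Q\<^sup>2 + Q))\<^sup>2)
    + (\<Sum>C\<in>Cs. real c * (Q\<^sup>2 + Q - 1) - real (\<Sum>D\<in>Cs - {C}. card (C \<inter> D))) = 0"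
proof -
  define r where "r x = real (card {C\<in>Cs. x \<in> C})" for x
  define T where "T C = real (\<Sum>D\<in>Cs - {C}. card (C \<inter> D))" for C
  have inter_lessThan: "C \<inter> {..<n} = C" if "C \<in> Cs" for C
    using Cs_subset[OF that] by auto
  have "(\<Sum>x<n. r x) = real (\<Sum>x<n. card {C\<in>Cs. x \<in> C})"
    unfolding r_def by simp
  also have "\<dots> = real (\<Sum>C\<in>Cs. card (C \<inter> {..<n}))"
    unfolding sum_card_incidences[OF finite_lessThan finite_Cs, of "\<lambda>C. C"] ..
  also have "\<dots> = (real c + 1) * real c"
    using card_Cs by (simp add: inter_lessThan card_Cs_member algebra_simps)
  finally have sum_r: "(\<Sum>x<n. r x) = (real c + 1) * real c" .
  have "(\<Sum>x<n. (r x)\<^sup>2) = real (\<Sum>x<n. (card {C\<in>Cs. x \<in> C})\<^sup>2)"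
    unfolding r_def by simp
  also have "\<dots> = real (\<Sum>C\<in>Cs. \<Sum>D\<in>Cs. card (C \<inter> D \<inter> {..<n}))"
    unfolding sum_card_incidences_squared[OF finite_lessThan finite_Cs, of "\<lambda>C. C"] ..
  also have "\<dots> = (\<Sum>C\<in>Cs. real c + T C)"
  proof -
    have "(\<Sum>D\<in>Cs. card (C \<inter> D \<inter> {..<n})) = c + (\<Sum>D\<in>Cs - {C}. card (C \<inter> D))"
      if "C \<in> Cs" for C
    proof -
      have "C \<inter> D \<inter> {..<n} = C \<inter> D" for D using inter_lessThan[OF that] by auto
      then show ?thesis
        using sum.remove[OF finite_Cs that, of "\<lambda>D. card (C \<inter> D)"] card_Cs_member[OF that] by simp
    qed
    then show ?thesis unfolding T_def by (simp add: of_nat_sum)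
  qed
  finally have sum_r2: "(\<Sum>x<n. (r x)\<^sup>2) = (\<Sum>C\<in>Cs. real c + T C)" .
  have "(\<Sum>x<n. (r x - (Q\<^sup>2 + Q))\<^sup>2)
      = (\<Sum>C\<in>Cs. real c + T C) - 2 * (Q\<^sup>2 + Q) * ((real c + 1) * real c) + real n * (Q\<^sup>2 + Q)\<^sup>2"
    using sum_sq_deviation[of "{..<n}" r] sum_r sum_r2 by simp
  also have "\<dots> = (\<Sum>C\<in>Cs. T C - real c * (Q\<^sup>2 + Q - 1))"
  proof -
    have "(real c + 1) * (real c + real c * (Q\<^sup>2 + Q - 1))
        - 2 * (Q\<^sup>2 + Q) * ((real c + 1) * real c) + real n * (Q\<^sup>2 + Q)\<^sup>2 = 0"
      unfolding real_n real_c by (simp add: algebra_simps power2_eq_square power3_eq_cube)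
    then show ?thesis using card_Cs by (simp add: sum.distrib sum_subtractf algebra_simps)
  qed
  finally show ?thesis unfolding r_def T_def by (simp add: sum_subtractf)
qed

lemma sum_card_Int_le:
  assumes "C \<in> Cs"
  shows "(\<Sum>D\<in>Cs - {C}. card (C \<inter> D)) \<le> c * (q\<^sup>2 + q - 1)"
proof -
  have "(\<Sum>D\<in>Cs - {C}. card (C \<inter> D)) \<le> (\<Sum>D\<in>Cs - {C}. q\<^sup>2 + q - 1)"
    using card_Int_le assms by (intro sum_mono) auto
  then show ?thesis using card_Cs finite_Cs assms by simp
qed

lemma card_cocliques_containing:
  assumes "x < n"
  shows "card {C\<in>Cs. x \<in> C} = q\<^sup>2 + q"
proof -
  have "0 \<le> real c * (Q\<^sup>2 + Q - 1) - real (\<Sum>D\<in>Cs - {C}. card (C \<inter> D))" if "C \<in> Cs" for C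
    using sum_card_Int_le[OF that] unfolding of_nat_le_iff[symmetric, where 'a=real] real_c_mult_meet_size
    by linarith
  then have "0 \<le> (\<Sum>C\<in>Cs. real c * (Q\<^sup>2 + Q - 1) - real (\<Sum>D\<in>Cs - {C}. card (C \<inter> D)))"
    by (intro sum_nonneg) auto
  then have "(\<Sum>x<n. (real (card {C\<in>Cs. x \<in> C}) - (Q\<^sup>2 + Q))\<^sup>2) = 0"
    using coclique_cover_deviation sum_nonneg[of "{..<n}" "\<lambda>x. (real (card {C\<in>Cs. x \<in> C}) - (Q\<^sup>2 + Q))\<^sup>2"]
    by simp
  then have "real (card {C\<in>Cs. x \<in> C}) = Q\<^sup>2 + Q"
    using assms by (simp add: sum_nonneg_eq_0_iff)
  then show ?thesis by (simp flip: of_nat_power of_nat_add)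
qed

lemma card_Int_cocliques:
  assumes C: "C \<in> Cs" and D: "D \<in> Cs" and "C \<noteq> D"
  shows "card (C \<inter> D) = q\<^sup>2 + q - 1"
proof -
  have "(\<Sum>x<n. (real (card {C\<in>Cs. x \<in> C}) - (Q\<^sup>2 + Q))\<^sup>2) = 0"
    using card_cocliques_containing by simp
  then have "(\<Sum>C\<in>Cs. real c * (Q\<^sup>2 + Q - 1) - real (\<Sum>D\<in>Cs - {C}. card (C \<inter> D))) = 0"
    using coclique_cover_deviation by simp
  moreover have "0 \<le> real c * (Q\<^sup>2 + Q - 1) - real (\<Sum>D\<in>Cs - {C}. card (C \<inter> D))" if "C \<in> Cs" for C
    using sum_card_Int_le[OF that] unfolding of_nat_le_iff[symmetric, where 'a=real] real_c_mult_meet_size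
    by linarith
  ultimately have "real (\<Sum>D\<in>Cs - {C}. card (C \<inter> D)) = real c * (Q\<^sup>2 + Q - 1)"
    using C by (simp add: sum_nonneg_eq_0_iff finite_Cs)
  then have "(\<Sum>D\<in>Cs - {C}. card (C \<inter> D)) = (\<Sum>D\<in>Cs - {C}. q\<^sup>2 + q - 1)"
    using card_Cs finite_Cs C unfolding real_c_mult_meet_size[symmetric] of_nat_eq_iff by simp
  then have "(\<Sum>D\<in>Cs - {C}. q\<^sup>2 + q - 1 - card (C \<inter> D)) = 0"
    using card_Int_le C by (subst sum_subtractf_nat) auto
  then have "\<forall>D\<in>Cs - {C}. q\<^sup>2 + q - 1 - card (C \<inter> D) = 0"
    using finite_Cs by (simp only: sum_eq_0_iff finite_Diff)
  then have "q\<^sup>2 + q - 1 - card (C \<inter> D) = 0"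
    using D \<open>C \<noteq> D\<close> by blast
  with card_Int_le[OF assms] show ?thesis by arith
qed

lemma card_cocliques_containing_pair:
  assumes x: "x < n" and y: "y < n" "y \<noteq> x" "\<not> E x y"
  shows "card {C\<in>Cs. x \<in> C \<and> y \<in> C} = q"
proof -
  define F where "F = {C\<in>Cs. x \<in> C}"
  define W where "W = {z. z < n \<and> z \<noteq> x \<and> \<not> E x z}"
  define p where "p z = real (card {C\<in>F. z \<in> C})" for z
  have finite: "finite F" "finite W"
    using finite_Cs unfolding F_def W_def by auto
  have card_F: "card F = q\<^sup>2 + q"
    using card_cocliques_containing[OF x] unfolding F_def .
  have card_W: "real (card W) = real n - 1 - real k"
    unfolding W_def by (rule srg_real_card_non_neighbours[OF srg x])
  have C_Int_W: "C \<inter> W = C - {x}" if "C \<in> F" for C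
    using that Cs_subset Cs_coclique unfolding F_def W_def by blast
  have "(\<Sum>z\<in>W. p z) = real (\<Sum>C\<in>F. card (C \<inter> W))"
    unfolding p_def sum_card_incidences[OF finite(2,1), of "\<lambda>C. C", symmetric] by simp
  also have "\<dots> = real (card F * (c - 1))"
    using C_Int_W card_Cs_member unfolding F_def by (simp add: card_Diff_singleton)
  also have "\<dots> = real (card W) * Q"
    unfolding card_F card_W of_nat_mult real_c_pred real_n real_c real_k
    by (simp add: algebra_simps power2_eq_square power3_eq_cube)
  finally have sum_p: "(\<Sum>z\<in>W. p z) = real (card W) * Q" .
  have "(\<Sum>z\<in>W. (p z)\<^sup>2) = real (\<Sum>C\<in>F. \<Sum>D\<in>F. card (C \<inter> D \<inter> W))"
    unfolding p_def sum_card_incidences_squared[OF finite(2,1), of "\<lambda>C. C", symmetric] by simp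
  also have "\<dots> = real (\<Sum>C\<in>F. \<Sum>D\<in>F. if C = D then c - 1 else q\<^sup>2 + q - 1 - 1)"
  proof (intro arg_cong[where f = real] sum.cong refl)
    fix C D assume C: "C \<in> F" and D: "D \<in> F"
    have "C \<inter> D \<inter> W = C \<inter> D - {x}"
      using C_Int_W[OF C] by blast
    then have "card (C \<inter> D \<inter> W) = card (C \<inter> D) - 1"
      using C D unfolding F_def by (simp add: card_Diff_singleton)
    moreover have "card (C \<inter> D) = (if C = D then c else q\<^sup>2 + q - 1)"
      using C D card_Cs_member card_Int_cocliques unfolding F_def by simp
    ultimately show "card (C \<inter> D \<inter> W) = (if C = D then c - 1 else q\<^sup>2 + q - 1 - 1)"
      by simp
  qed
  also have "\<dots> = real (card W) * Q\<^sup>2"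
    unfolding sum_sum_if_eq[OF finite(1)] of_nat_mult_pred card_F card_W real_c_pred real_meet_size_pred
      real_n real_c real_k
    by (simp add: algebra_simps power2_eq_square power3_eq_cube)
  finally have "p y = Q"
    using eq_of_moments[OF finite(2) sum_p] y unfolding W_def by simp
  moreover have "{C\<in>F. y \<in> C} = {C\<in>Cs. x \<in> C \<and> y \<in> C}"
    unfolding F_def by auto
  ultimately show ?thesis unfolding p_def by simp
qed

lemma valency_sum: "k + (q\<^sup>2 + q) = c + 1"
proof -
  have "real (k + (q\<^sup>2 + q)) = real (c + 1)"
    unfolding of_nat_add real_k real_c by (simp add: algebra_simps power2_eq_square power3_eq_cube)
  then show ?thesis by (simp only: of_nat_eq_iff)
qed

definition enum :: "nat \<Rightarrow> nat set" where
  "enum = (SOME \<phi>. bij_betw \<phi> {..<c + 1} Cs)"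

lemma bij_enum: "bij_betw enum {..<c + 1} Cs"
proof -
  obtain \<phi> where "bij_betw \<phi> {0..<card Cs} Cs"
    using ex_bij_betw_nat_finite[OF finite_Cs] by blast
  then have "\<exists>\<phi>. bij_betw \<phi> {..<c + 1} Cs"
    using card_Cs atLeast0LessThan by auto
  then show ?thesis unfolding enum_def by (rule someI_ex)
qed

lemma enum_in_Cs: "i < c + 1 \<Longrightarrow> enum i \<in> Cs"
  using bij_enum unfolding bij_betw_def by auto

lemma enum_inj: "i < c + 1 \<Longrightarrow> j < c + 1 \<Longrightarrow> i \<noteq> j \<Longrightarrow> enum i \<noteq> enum j"
  using bij_enum unfolding bij_betw_def inj_on_def by auto

lemma card_enum_filter: "card {i. i < c + 1 \<and> P (enum i)} = card {C\<in>Cs. P C}"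
proof -
  have "enum ` {i. i < c + 1 \<and> P (enum i)} = {C\<in>Cs. P C}"
  proof (rule equalityI[OF subsetI subsetI])
    fix C assume "C \<in> {C\<in>Cs. P C}"
    then obtain i where "i < c + 1" "C = enum i"
      using bij_betw_imp_surj_on[OF bij_enum] by auto
    with \<open>C \<in> {C\<in>Cs. P C}\<close> show "C \<in> enum ` {i. i < c + 1 \<and> P (enum i)}" by auto
  qed (auto simp: enum_in_Cs)
  moreover have "inj_on enum {i. i < c + 1 \<and> P (enum i)}"
    using bij_betw_imp_inj_on[OF bij_enum] by (rule inj_on_subset) auto
  ultimately show ?thesis by (metis card_image)
qed

definition extended_graph :: "nat \<Rightarrow> nat \<Rightarrow> bool" where
  "extended_graph = block_extension n E (c + 1) enum"

abbreviation ext_neighbours :: "nat \<Rightarrow> nat set" where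
  "ext_neighbours \<equiv> neighbours (n + (c + 1) + 1) extended_graph"

lemma enum_subset: "i < c + 1 \<Longrightarrow> enum i \<subseteq> {..<n}"
  using Cs_subset enum_in_Cs by blast

lemma ext_neighbours_old:
  "x < n \<Longrightarrow> ext_neighbours x = neighbours n E x \<union> (+) n ` {i. i < c + 1 \<and> x \<in> enum i}"
  unfolding extended_graph_def using enum_subset by (rule neighbours_block_extension_old)

lemma ext_neighbours_block: "i < c + 1 \<Longrightarrow> ext_neighbours (n + i) = enum i \<union> {n + (c + 1)}"
  unfolding extended_graph_def using enum_subset by (rule neighbours_block_extension_block)

lemma ext_neighbours_apex: "ext_neighbours (n + (c + 1)) = (+) n ` {..<c + 1}"
  unfolding extended_graph_def using enum_subset by (rule neighbours_block_extension_apex)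

lemma card_ext_neighbours:
  assumes "x < n + (c + 1) + 1"
  shows "card (ext_neighbours x) = c + 1"
  using assms
proof (cases rule: block_extension_vertex_cases)
  case 1
  have "card (ext_neighbours x) = k + card {C\<in>Cs. x \<in> C}"
    unfolding ext_neighbours_old[OF 1] card_enum_filter[of "\<lambda>C. x \<in> C", symmetric]
    using card_Un_shifted_image[of "neighbours n E x" n "{i. i < c + 1 \<and> x \<in> enum i}"]
      srg_card_neighbours[OF srg 1] by (auto simp: neighbours_def)
  then show ?thesis using card_cocliques_containing[OF 1] valency_sum by simp
next
  case (2 i)
  have "n + (c + 1) \<notin> enum i"
    using enum_subset[OF 2(1)] by auto
  then show ?thesis
    using card_Cs_member[OF enum_in_Cs[OF 2(1)]] finite_Cs_member[OF enum_in_Cs[OF 2(1)]]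
    unfolding 2(2) ext_neighbours_block[OF 2(1)] by simp
next
  case 3
  show ?thesis unfolding 3 ext_neighbours_apex by (simp add: card_image)
qed

lemma ext_common_neighbours_old_old:
  assumes x: "x < n" and y: "y < n" and "x \<noteq> y"
  shows "card (ext_neighbours x \<inter> ext_neighbours y) = (if extended_graph x y then 0 else q\<^sup>2 + q)"
proof -
  have "ext_neighbours x \<inter> ext_neighbours y
      = (neighbours n E x \<inter> neighbours n E y) \<union> (+) n ` {i. i < c + 1 \<and> x \<in> enum i \<and> y \<in> enum i}"
    unfolding ext_neighbours_old[OF x] ext_neighbours_old[OF y] by (auto simp: neighbours_def)
  moreover have "neighbours n E x \<inter> neighbours n E y \<subseteq> {..<n}"
    by (auto simp: neighbours_def)
  ultimately have "card (ext_neighbours x \<inter> ext_neighbours y)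
      = card (neighbours n E x \<inter> neighbours n E y) + card {C\<in>Cs. x \<in> C \<and> y \<in> C}"
    using card_Un_shifted_image card_enum_filter[of "\<lambda>C. x \<in> C \<and> y \<in> C"] by simp
  moreover have "extended_graph x y = E x y"
    using x y unfolding extended_graph_def block_extension_def by simp
  moreover have "card {C\<in>Cs. x \<in> C \<and> y \<in> C} = (if E x y then 0 else q)"
  proof (cases "E x y")
    case True
    then have "{C\<in>Cs. x \<in> C \<and> y \<in> C} = {}" using Cs_coclique by blast
    then have "card {C\<in>Cs. x \<in> C \<and> y \<in> C} = 0" by (metis card.empty)
    with True show ?thesis by simp
  qed (use card_cocliques_containing_pair[OF x y] \<open>x \<noteq> y\<close> in simp)
  ultimately show ?thesis
    using srg_card_common_neighbours[OF srg x y] \<open>x \<noteq> y\<close> by simp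
qed

lemma ext_common_neighbours_old_block:
  assumes x: "x < n" and j: "j < c + 1"
  shows "card (ext_neighbours x \<inter> ext_neighbours (n + j))
    = (if extended_graph x (n + j) then 0 else q\<^sup>2 + q)"
proof -
  have "ext_neighbours x \<inter> ext_neighbours (n + j) = {z\<in>enum j. E x z}"
    unfolding ext_neighbours_old[OF x] ext_neighbours_block[OF j]
    using enum_subset[OF j] by (auto simp: neighbours_def)
  moreover have "extended_graph x (n + j) = (x \<in> enum j)"
    using x j unfolding extended_graph_def block_extension_def by simp
  moreover have "card {z\<in>enum j. E x z} = (if x \<in> enum j then 0 else q\<^sup>2 + q)"
  proof (cases "x \<in> enum j")
    case True
    then have "{z\<in>enum j. E x z} = {}" using Cs_coclique[OF enum_in_Cs[OF j]] by blast
    then have "card {z\<in>enum j. E x z} = 0" by (metis card.empty)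
    with True show ?thesis by simp
  qed (use card_neighbours_in_coclique[OF enum_in_Cs[OF j] x] in simp)
  ultimately show ?thesis by simp
qed

lemma ext_common_neighbours_old_apex:
  assumes x: "x < n"
  shows "card (ext_neighbours x \<inter> ext_neighbours (n + (c + 1)))
    = (if extended_graph x (n + (c + 1)) then 0 else q\<^sup>2 + q)"
proof -
  have "ext_neighbours x \<inter> ext_neighbours (n + (c + 1)) = (+) n ` {i. i < c + 1 \<and> x \<in> enum i}"
    unfolding ext_neighbours_old[OF x] ext_neighbours_apex by (auto simp: neighbours_def)
  moreover have "\<not> extended_graph x (n + (c + 1))"
    using x unfolding extended_graph_def block_extension_def by simp
  ultimately show ?thesis
    using card_enum_filter[of "\<lambda>C. x \<in> C"] card_cocliques_containing[OF x] by (simp add: card_image)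
qed

lemma ext_common_neighbours_blocks:
  assumes i: "i < c + 1" and j: "j < c + 1" and "i \<noteq> j"
  shows "card (ext_neighbours (n + i) \<inter> ext_neighbours (n + j))
    = (if extended_graph (n + i) (n + j) then 0 else q\<^sup>2 + q)"
proof -
  have "ext_neighbours (n + i) \<inter> ext_neighbours (n + j) = insert (n + (c + 1)) (enum i \<inter> enum j)"
    unfolding ext_neighbours_block[OF i] ext_neighbours_block[OF j] by auto
  moreover have "n + (c + 1) \<notin> enum i \<inter> enum j"
    using enum_subset[OF i] by auto
  moreover have "\<not> extended_graph (n + i) (n + j)"
    using i j unfolding extended_graph_def block_extension_def by simp
  ultimately show ?thesis
    using card_Int_cocliques[OF enum_in_Cs[OF i] enum_in_Cs[OF j] enum_inj[OF assms]]
      finite_Cs_member[OF enum_in_Cs[OF i]] q_pos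
    by simp
qed

lemma ext_common_neighbours_block_apex:
  assumes i: "i < c + 1"
  shows "card (ext_neighbours (n + i) \<inter> ext_neighbours (n + (c + 1)))
    = (if extended_graph (n + i) (n + (c + 1)) then 0 else q\<^sup>2 + q)"
proof -
  have "ext_neighbours (n + i) \<inter> ext_neighbours (n + (c + 1)) = {}"
    unfolding ext_neighbours_block[OF i] ext_neighbours_apex using enum_subset[OF i] by auto
  moreover have "extended_graph (n + i) (n + (c + 1))"
    using i unfolding extended_graph_def block_extension_def by simp
  ultimately show ?thesis by simp
qed

lemma card_ext_common_neighbours:
  assumes "x < y" "y < n + (c + 1) + 1"
  shows "card (ext_neighbours x \<inter> ext_neighbours y) = (if extended_graph x y then 0 else q\<^sup>2 + q)"
proof -
  have "x < n + (c + 1) + 1" using assms by simp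
  then show ?thesis
  proof (cases rule: block_extension_vertex_cases)
    case 1
    from assms(2) show ?thesis
      by (cases rule: block_extension_vertex_cases)
        (use 1 assms(1) ext_common_neighbours_old_old ext_common_neighbours_old_block
           ext_common_neighbours_old_apex in auto)
  next
    case (2 i)
    from assms(2) show ?thesis
      by (cases rule: block_extension_vertex_cases)
        (use 2 assms(1) ext_common_neighbours_blocks ext_common_neighbours_block_apex in auto)
  qed (use assms in simp)
qed

lemma extended_graph_srg: "strongly_regular (n + (c + 1) + 1) extended_graph (c + 1) 0 (q\<^sup>2 + q)"
proof -
  have simple: "simple_graph (n + (c + 1) + 1) extended_graph"
    unfolding extended_graph_def
    by (rule simple_graph_block_extension) (use srg in \<open>simp add: strongly_regular_def\<close>)
  have common: "card (ext_neighbours x \<inter> ext_neighbours y) = (if extended_graph x y then 0 else q\<^sup>2 + q)"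
    if "x < n + (c + 1) + 1" "y < n + (c + 1) + 1" "x \<noteq> y" for x y
  proof (cases "x < y")
    case False
    then have "y < x" using that(3) by simp
    moreover have "extended_graph y x = extended_graph x y"
      using simple that unfolding simple_graph_def by blast
    ultimately show ?thesis
      using card_ext_common_neighbours[of y x] that(1) by (simp add: Int_commute)
  qed (use card_ext_common_neighbours that in blast)
  have "{z. z < n + (c + 1) + 1 \<and> extended_graph x z \<and> extended_graph y z}
      = ext_neighbours x \<inter> ext_neighbours y" for x y
    unfolding neighbours_def by auto
  then show ?thesis
    unfolding strongly_regular_def using simple card_ext_neighbours common
    by (auto simp: neighbours_def)
qed

lemma extended_graph_order: "n + (c + 1) + 1 = q\<^sup>2 * (q + 3)\<^sup>2"
proof -
  have "real (n + (c + 1) + 1) = real (q\<^sup>2 * (q + 3)\<^sup>2)"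
    unfolding of_nat_add real_n real_c by (simp add: algebra_simps power2_eq_square)
  then show ?thesis by (simp only: of_nat_eq_iff)
qed

lemma extended_graph_eigenvalues:
  "srg_eigenvalues (n + (c + 1) + 1) extended_graph (c + 1) Q (- (Q\<^sup>2 + 2 * Q))"
proof (rule srg_eigenvaluesI[OF extended_graph_srg])
  have "1 \<le> Q\<^sup>2" using Q_ge_1 by simp
  then have "2 \<le> Q\<^sup>2 + 2 * Q - 1" using Q_ge_1 by linarith
  then have "2 * (Q + 1) \<le> (Q\<^sup>2 + 2 * Q - 1) * (Q + 1)"
    using Q_ge_1 by (intro mult_right_mono) simp_all
  then show "Q \<le> real (c + 1)"
    unfolding of_nat_add real_c by simp
  show "- (Q\<^sup>2 + 2 * Q) < -1"
    using Q_ge_1 by (simp add: power2_eq_square) (smt (verit) mult_ge1_I Q_ge_1)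
  show "Q * - (Q\<^sup>2 + 2 * Q) = real (q\<^sup>2 + q) - real (c + 1)"
    unfolding of_nat_add real_c by (simp add: algebra_simps power2_eq_square)
qed (use q_pos in simp_all)

end

lemma Suc_not_dvd_cubic:
  assumes "0 < (q :: nat)"
  shows "\<not> (q + 1) dvd q * (q\<^sup>2 + 3 * q + 1)"
proof
  assume dvd: "(q + 1) dvd q * (q\<^sup>2 + 3 * q + 1)"
  have "1 \<le> q\<^sup>2 + 2 * q" using assms by (simp add: Suc_le_eq)
  then have "int (q * (q\<^sup>2 + 3 * q + 1)) = int ((q + 1) * (q\<^sup>2 + 2 * q - 1) + 1)"
    by (simp add: of_nat_diff algebra_simps power2_eq_square)
  then have "q * (q\<^sup>2 + 3 * q + 1) = (q + 1) * (q\<^sup>2 + 2 * q - 1) + 1"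
    by (simp only: of_nat_eq_iff)
  with dvd have "(q + 1) dvd 1"
    by (metis dvd_add_right_iff dvd_triv_left)
  with assms show False by simp
qed

lemma srg_lam_mu_from_spectrum:
  fixes q n k lam mu :: nat
  defines "Q \<equiv> real q"
  assumes q: "0 < q" and srg: "strongly_regular n E k lam mu"
    and eigs: "srg_eigenvalues n E k Q (- (Q\<^sup>2 + Q))"
  shows "real lam = real k - Q ^ 3 - 2 * Q\<^sup>2" "real mu = real k - Q ^ 3 - Q\<^sup>2"
proof -
  have Q: "1 \<le> Q" using q unfolding Q_def by simp
  have ev: "eigenvalue (adj_matrix n E) Q" "eigenvalue (adj_matrix n E) (- (Q\<^sup>2 + Q))"
    using eigs unfolding srg_eigenvalues_def by auto
  have "\<bar>- (Q\<^sup>2 + Q)\<bar> \<le> real k"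
    using ev(2) srg_card_neighbours[OF srg] regular_eigenvalue_abs_le
    unfolding eigenvalue_adj_matrix_iff by blast
  moreover have "Q < Q\<^sup>2 + Q" using Q by (simp add: power2_eq_square)
  ultimately have "Q \<noteq> - (Q\<^sup>2 + Q)" "Q \<noteq> real k" "- (Q\<^sup>2 + Q) \<noteq> real k"
    using Q by linarith+
  note sum_product = srg_eigenvalue_sum_product[OF srg ev this]
  then show "real lam = real k - Q ^ 3 - 2 * Q\<^sup>2" "real mu = real k - Q ^ 3 - Q\<^sup>2"
    by (simp_all add: algebra_simps power2_eq_square power3_eq_cube)
qed

lemma srg_valency_from_spectrum:
  fixes q n k lam mu m :: nat
  defines "Q \<equiv> real q"
  assumes q: "0 < q" and srg: "strongly_regular n E k lam mu"
    and n: "n = (q\<^sup>2 + 2 * q - 1) * (q\<^sup>2 + 3 * q + 1)"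
    and eigs: "srg_eigenvalues n E k Q (- (Q\<^sup>2 + Q))"
    and mult: "real n * (- (Q\<^sup>2 + Q)) = real m * (- (Q\<^sup>2 + Q) - real k)"
  shows "real k = Q ^ 3 + 2 * Q\<^sup>2"
proof -
  have Q: "1 \<le> Q" "1 \<le> Q\<^sup>2" using q unfolding Q_def by simp_all
  have real_n: "real n = (Q\<^sup>2 + 2 * Q - 1) * (Q\<^sup>2 + 3 * Q + 1)"
    unfolding n of_nat_mult real_sq_plus_2q_minus_1[OF q] by (simp add: Q_def)
  note lam = srg_lam_mu_from_spectrum(1)[OF q srg eigs[unfolded Q_def], folded Q_def]
  note mu = srg_lam_mu_from_spectrum(2)[OF q srg eigs[unfolded Q_def], folded Q_def]
  have "0 < real n" unfolding real_n using Q by (intro mult_pos_pos) linarith+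
  then have "real k * real k = real k + real lam * real k + real mu * (real n - 1 - real k)"
    by (intro srg_parameter_count[OF srg]) simp
  then have "(real k - (Q ^ 3 + 2 * Q\<^sup>2)) * (real k - (real n - Q ^ 3 - 3 * Q\<^sup>2)) = 0"
    unfolding lam mu real_n by (simp add: algebra_simps power2_eq_square power3_eq_cube)
  moreover have "real k \<noteq> real n - Q ^ 3 - 3 * Q\<^sup>2"
  proof
    assume k: "real k = real n - Q ^ 3 - 3 * Q\<^sup>2"
    have "(Q\<^sup>2 + 2 * Q - 1) * (Q + 1) * (real m * (Q + 1) - Q * (Q\<^sup>2 + 3 * Q + 1))
        = real n * (- (Q\<^sup>2 + Q)) - real m * (- (Q\<^sup>2 + Q) - real k)"
      unfolding k real_n by (simp add: algebra_simps power2_eq_square power3_eq_cube)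
    moreover have "Q\<^sup>2 + 2 * Q \<noteq> 1" "Q + 1 \<noteq> 0"
      using Q by linarith+
    ultimately have "real m * (Q + 1) = Q * (Q\<^sup>2 + 3 * Q + 1)"
      using mult by simp
    then have "real (m * (q + 1)) = real (q * (q\<^sup>2 + 3 * q + 1))"
      unfolding Q_def by (simp add: algebra_simps)
    then have "(q + 1) dvd q * (q\<^sup>2 + 3 * q + 1)"
      by (metis dvd_triv_right of_nat_eq_iff)
    with Suc_not_dvd_cubic[OF q] show False ..
  qed
  ultimately show ?thesis by simp
qed

lemma srg_parameters_from_spectrum:
  fixes q n k lam mu m :: nat
  defines "Q \<equiv> real q"
  assumes q: "0 < q" and srg: "strongly_regular n E k lam mu"
    and n: "n = (q\<^sup>2 + 2 * q - 1) * (q\<^sup>2 + 3 * q + 1)"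
    and eigs: "srg_eigenvalues n E k Q (- (Q\<^sup>2 + Q))"
    and mult: "real n * (- (Q\<^sup>2 + Q)) = real m * (- (Q\<^sup>2 + Q) - real k)"
  shows "k = q ^ 3 + 2 * q\<^sup>2" "lam = 0" "mu = q\<^sup>2" "m = (q\<^sup>2 + 2 * q - 1) * (q + 1)"
proof -
  note k = srg_valency_from_spectrum[OF q srg n eigs[unfolded Q_def] mult[unfolded Q_def], folded Q_def]
  note lam = srg_lam_mu_from_spectrum(1)[OF q srg eigs[unfolded Q_def], folded Q_def]
  note mu = srg_lam_mu_from_spectrum(2)[OF q srg eigs[unfolded Q_def], folded Q_def]
  have "real k = real (q ^ 3 + 2 * q\<^sup>2)" using k unfolding Q_def by simp
  then show "k = q ^ 3 + 2 * q\<^sup>2" by (simp only: of_nat_eq_iff)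
  show "lam = 0" using lam k by simp
  show "mu = q\<^sup>2" using mu k unfolding Q_def by (simp flip: of_nat_eq_iff)
  have Q: "1 \<le> Q" "1 \<le> Q\<^sup>2" using q unfolding Q_def by simp_all
  have "Q * (Q\<^sup>2 + 3 * Q + 1) * (real m - (Q\<^sup>2 + 2 * Q - 1) * (Q + 1))
      = real n * (- (Q\<^sup>2 + Q)) - real m * (- (Q\<^sup>2 + Q) - real k)"
    unfolding k n of_nat_mult real_sq_plus_2q_minus_1[OF q]
    by (simp add: Q_def algebra_simps power2_eq_square power3_eq_cube)
  moreover have "0 < Q * (Q\<^sup>2 + 3 * Q + 1)"
    using Q by (intro mult_pos_pos) linarith+
  ultimately have "real m = (Q\<^sup>2 + 2 * Q - 1) * (Q + 1)"
    using mult by (metis diff_self eq_iff_diff_eq_0 less_irrefl mult_eq_0_iff)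
  then have "real m = real ((q\<^sup>2 + 2 * q - 1) * (q + 1))"
    unfolding of_nat_mult real_sq_plus_2q_minus_1[OF q] by (simp add: Q_def)
  then show "m = (q\<^sup>2 + 2 * q - 1) * (q + 1)"
    by (simp only: of_nat_eq_iff)
qed

lemma delsarte_coclique_iff:
  assumes "0 < q" "n = (q\<^sup>2 + 2 * q - 1) * (q\<^sup>2 + 3 * q + 1)" "k = q ^ 3 + 2 * q\<^sup>2"
  shows "delsarte_coclique n E k (- (real q ^ 2 + real q)) C
    \<longleftrightarrow> coclique n E C \<and> card C = (q\<^sup>2 + 2 * q - 1) * (q + 1)"
proof -
  define Q where "Q = real q"
  have Q: "1 \<le> Q" using assms(1) unfolding Q_def by simp
  note real_pred = real_sq_plus_2q_minus_1[OF assms(1), folded Q_def]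
  have "0 < Q * (Q\<^sup>2 + 3 * Q + 1)"
    using Q by (intro mult_pos_pos) (simp_all add: add_pos_nonneg)
  then have "real n * (- (Q\<^sup>2 + Q)) / (- (Q\<^sup>2 + Q) - real k) = (Q\<^sup>2 + 2 * Q - 1) * (Q + 1)"
    unfolding assms(2,3) of_nat_mult real_pred
    by (simp add: Q_def field_simps power2_eq_square power3_eq_cube)
  also have "\<dots> = real ((q\<^sup>2 + 2 * q - 1) * (q + 1))"
    unfolding of_nat_mult real_pred by (simp add: Q_def)
  finally show ?thesis
    unfolding delsarte_coclique_def Q_def by (simp only: of_nat_eq_iff)
qed

theorem lemma7p1:
  fixes q n k lam mu :: nat and E :: "nat \<Rightarrow> nat \<Rightarrow> bool"
  assumes "q > 0"
    and "strongly_regular n E k lam mu"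
    and "primitive n E"
    and "n = (q^2 + 2*q - 1) * (q^2 + 3*q + 1)"
    and "srg_eigenvalues n E k (real q) (- (real q^2 + real q))"
    and "real n * (- (real q^2 + real q)) =
           real (eig_mult (adj_matrix n E) (- (real q^2 + real q))) *
           ((- (real q^2 + real q)) - real k)"
    and "card {C. delsarte_coclique n E k (- (real q^2 + real q)) C} =
           eig_mult (adj_matrix n E) (- (real q^2 + real q)) + 1"
  shows "\<exists>n' k' lam' mu' E'. strongly_regular n' E' k' lam' mu' \<and>
           n' = q^2 * (q + 3)^2 \<and>
           srg_eigenvalues n' E' k' (real q) (- (real q^2 + 2 * real q))"
proof -
  define c where "c = (q\<^sup>2 + 2 * q - 1) * (q + 1)"
  define Cs where "Cs = {C. coclique n E C \<and> card C = c}"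
  note params = srg_parameters_from_spectrum[OF assms(1,2,4,5,6)]
  have "{C. delsarte_coclique n E k (- (real q^2 + real q)) C} = Cs"
    unfolding Cs_def c_def using delsarte_coclique_iff[OF assms(1,4) params(1)] by blast
  then have "card Cs = c + 1"
    using assms(7) params(4) unfolding c_def by simp
  then interpret srg_delsarte_cocliques q n k c E Cs
    using assms(1,2,4) params unfolding c_def Cs_def by unfold_locales simp_all
  show ?thesis
    using extended_graph_srg extended_graph_order extended_graph_eigenvalues by blast
qed

end
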